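(* Let $(X,\phi)$ be an acyclic convex geometry, let $A\subseteq X$ be a critical minimal generator of $b\in X$, and let $\Sigma$ be any unit implicational base of $(X,\phi)$. Then there exists an implication $C\to b\in\Sigma$ with $A\subseteq C$.
   Context: All sets are finite. A closure operator $\phi$ on $X$ is extensive, monotone and idempotent on $2^X$; closed sets are those with $\phi(C)=C$. $(X,\phi)$ is standard if $\phi(\emptyset)=\emptyset$ and $\phi(\{x\})\setminus\{x\}$ is closed for each $x$. A unit implicational base $\Sigma$ (set of implications $A\to b$, $A\subseteq X$, $b\in X$) is an implicational base of $(X,\phi)$ if its closed sets (sets $S$ such that for each $A\to b\in\Sigma$, $A\not\subseteq S$ or $b\in S$) are exactly the closed sets of $\phi$. $\Sigma$ is acyclic if the directed graph on $X$ with arcs $x\to y$ whenever some $A\to y\in\Sigma$ has $x\in A$ has no directed cycle; $\Sigma$ is irredundant if removing any implication changes the closed sets. An acyclic convex geometry is a standard closure space admitting an acyclic implicational base. $A$ is a minimal generator of $b$ if $b\in\phi(A)$ and $b\notin\phi(A\setminus\{x\})$ for all $x\in A$. An acyclic convex geometry admits a unique irredundant implicational base all of whose implications $A\to b$ have $A$ a minimal generator of $b$ (the critical base); a minimal generator $A$ of $b$ is critical if $A\to b$ is in the critical base. *)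

theory Defs
  imports Main
begin

definition closure_operator :: "'a set \<Rightarrow> ('a set \<Rightarrow> 'a set) \<Rightarrow> bool" where
  "closure_operator X phi \<longleftrightarrow>
     (\<forall>A. A \<subseteq> X \<longrightarrow> A \<subseteq> phi A \<and> phi A \<subseteq> X) \<and>
     (\<forall>A B. A \<subseteq> B \<and> B \<subseteq> X \<longrightarrow> phi A \<subseteq> phi B) \<and>
     (\<forall>A. A \<subseteq> X \<longrightarrow> phi (phi A) = phi A)"

definition closed_sets :: "'a set \<Rightarrow> ('a set \<Rightarrow> 'a set) \<Rightarrow> 'a set set" where
  "closed_sets X phi = {C. C \<subseteq> X \<and> phi C = C}"

definition standard :: "'a set \<Rightarrow> ('a set \<Rightarrow> 'a set) \<Rightarrow> bool" where
  "standard X phi \<longleftrightarrow> phi {} = {} \<and> (\<forall>x\<in>X. phi {x} - {x} \<in> closed_sets X phi)"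

text \<open>A unit implication A \<rightarrow> b is represented as the pair (A, b).\<close>
definition unit_implications :: "'a set \<Rightarrow> ('a set \<times> 'a) set \<Rightarrow> bool" where
  "unit_implications X \<Sigma> \<longleftrightarrow> (\<forall>(A, b)\<in>\<Sigma>. A \<subseteq> X \<and> b \<in> X)"

definition imp_closed_sets :: "'a set \<Rightarrow> ('a set \<times> 'a) set \<Rightarrow> 'a set set" where
  "imp_closed_sets X \<Sigma> = {S. S \<subseteq> X \<and> (\<forall>(A, b)\<in>\<Sigma>. \<not> A \<subseteq> S \<or> b \<in> S)}"

definition implicational_base :: "'a set \<Rightarrow> ('a set \<Rightarrow> 'a set) \<Rightarrow> ('a set \<times> 'a) set \<Rightarrow> bool" where
  "implicational_base X phi \<Sigma> \<longleftrightarrow>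
     unit_implications X \<Sigma> \<and> imp_closed_sets X \<Sigma> = closed_sets X phi"

definition dependency_graph :: "('a set \<times> 'a) set \<Rightarrow> ('a \<times> 'a) set" where
  "dependency_graph \<Sigma> = {(x, y). \<exists>A. (A, y) \<in> \<Sigma> \<and> x \<in> A}"

definition acyclic_base :: "('a set \<times> 'a) set \<Rightarrow> bool" where
  "acyclic_base \<Sigma> \<longleftrightarrow> acyclic (dependency_graph \<Sigma>)"

definition irredundant :: "'a set \<Rightarrow> ('a set \<times> 'a) set \<Rightarrow> bool" where
  "irredundant X \<Sigma> \<longleftrightarrow> (\<forall>i\<in>\<Sigma>. imp_closed_sets X (\<Sigma> - {i}) \<noteq> imp_closed_sets X \<Sigma>)"

definition acyclic_convex_geometry :: "'a set \<Rightarrow> ('a set \<Rightarrow> 'a set) \<Rightarrow> bool" where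
  "acyclic_convex_geometry X phi \<longleftrightarrow>
     finite X \<and> closure_operator X phi \<and> standard X phi \<and>
     (\<exists>\<Sigma>. implicational_base X phi \<Sigma> \<and> acyclic_base \<Sigma>)"

definition minimal_generator :: "'a set \<Rightarrow> ('a set \<Rightarrow> 'a set) \<Rightarrow> 'a set \<Rightarrow> 'a \<Rightarrow> bool" where
  "minimal_generator X phi A b \<longleftrightarrow>
     A \<subseteq> X \<and> b \<in> phi A \<and> (\<forall>x\<in>A. b \<notin> phi (A - {x}))"

text \<open>The critical base: an irredundant implicational base all of whose implications
  have a minimal generator as premise (unique for acyclic convex geometries).\<close>
definition critical_base :: "'a set \<Rightarrow> ('a set \<Rightarrow> 'a set) \<Rightarrow> ('a set \<times> 'a) set \<Rightarrow> bool" where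
  "critical_base X phi \<Sigma> \<longleftrightarrow>
     implicational_base X phi \<Sigma> \<and> irredundant X \<Sigma> \<and>
     (\<forall>(A, b)\<in>\<Sigma>. minimal_generator X phi A b)"

definition critical_generator :: "'a set \<Rightarrow> ('a set \<Rightarrow> 'a set) \<Rightarrow> 'a set \<Rightarrow> 'a \<Rightarrow> bool" where
  "critical_generator X phi A b \<longleftrightarrow>
     minimal_generator X phi A b \<and> (\<exists>\<Sigma>. critical_base X phi \<Sigma> \<and> (A, b) \<in> \<Sigma>)"

end

theory Submission
  imports Defs
begin

(* Let F = phi A. For every a in A the set F - {a, b} turns out to be closed. Since A
   generates b, the set F - {b} is not closed, so some implication C -> y of Sigma has
   C within F - {b} and y outside it; closedness of F forces y = b, and closedness of
   F - {a, b} forces a in C for every a in A.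

   Closedness of F - {a, b} rests on two ingredients. An acyclic base orders X so that
   an element derivable from Y is already derivable from the part of Y below it, and a
   minimal generator lies strictly below what it generates. Irredundancy of the critical
   base yields a set T that contains A, misses b and respects every implication except
   A -> b; then T intersected with F - {a} respects all of the critical base, and it
   contains the part of F - {a, b} below b. *)

locale closure_space =
  fixes X :: "'a set" and phi :: "'a set \<Rightarrow> 'a set"
  assumes closure_operator: "closure_operator X phi"
begin

lemma closure_extensive: "A \<subseteq> X \<Longrightarrow> A \<subseteq> phi A"
  using closure_operator unfolding closure_operator_def by simp

lemma closure_subset: "A \<subseteq> X \<Longrightarrow> phi A \<subseteq> X"
  using closure_operator unfolding closure_operator_def by simp

lemma closure_mono: "A \<subseteq> B \<Longrightarrow> B \<subseteq> X \<Longrightarrow> phi A \<subseteq> phi B"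
  using closure_operator unfolding closure_operator_def by simp

lemma closure_idem: "A \<subseteq> X \<Longrightarrow> phi (phi A) = phi A"
  using closure_operator unfolding closure_operator_def by simp

lemma closure_least: "Y \<subseteq> Z \<Longrightarrow> Z \<subseteq> X \<Longrightarrow> phi Z = Z \<Longrightarrow> phi Y \<subseteq> Z"
  using closure_mono[of Y Z] by simp

lemma closure_subset_closure: "A \<subseteq> phi B \<Longrightarrow> B \<subseteq> X \<Longrightarrow> phi A \<subseteq> phi B"
  using closure_least[of A "phi B"] closure_subset closure_idem by blast

lemma closed_iff_respects_base:
  assumes "implicational_base X phi \<Sigma>" and "Z \<subseteq> X"
  shows "phi Z = Z \<longleftrightarrow> (\<forall>(D, y)\<in>\<Sigma>. D \<subseteq> Z \<longrightarrow> y \<in> Z)"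
proof -
  have "Z \<in> imp_closed_sets X \<Sigma> \<longleftrightarrow> Z \<in> closed_sets X phi"
    using assms(1) unfolding implicational_base_def by simp
  then show ?thesis
    using assms(2) unfolding imp_closed_sets_def closed_sets_def by blast
qed

lemma closed_respects_base:
  assumes "implicational_base X phi \<Sigma>" "Z \<subseteq> X" "phi Z = Z" "(D, y) \<in> \<Sigma>" "D \<subseteq> Z"
  shows "y \<in> Z"
proof -
  have "\<forall>(D, y)\<in>\<Sigma>. D \<subseteq> Z \<longrightarrow> y \<in> Z"
    using closed_iff_respects_base[OF assms(1,2)] assms(3) by blast
  then show ?thesis
    using assms(4,5) by blast
qed

lemma closure_respects_base:
  assumes "implicational_base X phi \<Sigma>" "Y \<subseteq> X" "(D, y) \<in> \<Sigma>" "D \<subseteq> phi Y"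
  shows "y \<in> phi Y"
  using closed_respects_base[OF assms(1) closure_subset closure_idem] assms(2-4) by blast

lemma base_derives_closure_point:
  assumes base: "implicational_base X phi \<Sigma>" and "Y \<subseteq> X" "y \<in> phi Y" "y \<notin> Y"
  shows "\<exists>D. (D, y) \<in> \<Sigma> \<and> D \<subseteq> phi Y - {y}"
proof (rule ccontr)
  assume no_premise: "\<not> ?thesis"
  have "phi Y - {y} \<subseteq> X"
    using closure_subset \<open>Y \<subseteq> X\<close> by blast
  moreover have "phi (phi Y - {y}) = phi Y - {y}"
    unfolding closed_iff_respects_base[OF base \<open>phi Y - {y} \<subseteq> X\<close>]
    using closure_respects_base[OF base \<open>Y \<subseteq> X\<close>] no_premise by fast
  moreover have "Y \<subseteq> phi Y - {y}"
    using closure_extensive assms(2,4) by blast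
  ultimately have "phi Y \<subseteq> phi Y - {y}"
    using closure_least by blast
  then show False
    using \<open>y \<in> phi Y\<close> by blast
qed

end

lemma imp_closed_sets_respects:
  "T \<in> imp_closed_sets X \<Sigma> \<Longrightarrow> (D, y) \<in> \<Sigma> \<Longrightarrow> D \<subseteq> T \<Longrightarrow> y \<in> T"
  unfolding imp_closed_sets_def by auto

lemma irredundant_conclusion_notin_premise:
  assumes "irredundant X \<Sigma>" "(D, y) \<in> \<Sigma>"
  shows "y \<notin> D"
proof
  assume "y \<in> D"
  then have "imp_closed_sets X (\<Sigma> - {(D, y)}) = imp_closed_sets X \<Sigma>"
    using assms(2) unfolding imp_closed_sets_def by blast
  then show False
    using assms unfolding irredundant_def by blast
qed

lemma irredundant_separating_set:
  assumes "irredundant X \<Sigma>" "(A, b) \<in> \<Sigma>"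
  obtains T where "T \<in> imp_closed_sets X (\<Sigma> - {(A, b)})" "A \<subseteq> T" "b \<notin> T"
proof -
  have "imp_closed_sets X \<Sigma> \<subseteq> imp_closed_sets X (\<Sigma> - {(A, b)})"
    unfolding imp_closed_sets_def by blast
  moreover have "imp_closed_sets X (\<Sigma> - {(A, b)}) \<noteq> imp_closed_sets X \<Sigma>"
    using assms unfolding irredundant_def by blast
  ultimately obtain T where T: "T \<in> imp_closed_sets X (\<Sigma> - {(A, b)})" "T \<notin> imp_closed_sets X \<Sigma>"
    by blast
  then have "A \<subseteq> T \<and> b \<notin> T"
    unfolding imp_closed_sets_def by blast
  then show ?thesis
    using that T(1) by blast
qed

locale acyclic_closure_space = closure_space +
  fixes S :: "('a set \<times> 'a) set"
  assumes finite: "finite X"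
    and base: "implicational_base X phi S"
    and acyclic: "acyclic_base S"
begin

definition prec :: "('a \<times> 'a) set" where
  "prec = (dependency_graph S)\<^sup>+"

definition below :: "'a \<Rightarrow> 'a set" where
  "below y = {x. x = y \<or> (x, y) \<in> prec}"

lemma wf_prec: "wf prec"
proof -
  have "dependency_graph S \<subseteq> X \<times> X"
    using base unfolding implicational_base_def unit_implications_def dependency_graph_def
    by fast
  then have "finite (dependency_graph S)"
    using finite by (meson finite_SigmaI finite_subset)
  then show ?thesis
    using acyclic unfolding acyclic_base_def prec_def by (simp add: finite_acyclic_wf wf_trancl)
qed

lemma prec_trans: "(x, y) \<in> prec \<Longrightarrow> (y, z) \<in> prec \<Longrightarrow> (x, z) \<in> prec"
  unfolding prec_def by (meson trancl_trans)

lemma prec_irrefl: "(x, x) \<notin> prec"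
  using acyclic unfolding acyclic_base_def acyclic_def prec_def by blast

lemma prec_asym: "(x, y) \<in> prec \<Longrightarrow> (y, x) \<notin> prec"
  using prec_trans prec_irrefl by blast

lemma premise_prec: "(D, y) \<in> S \<Longrightarrow> d \<in> D \<Longrightarrow> (d, y) \<in> prec"
  unfolding prec_def dependency_graph_def by blast

lemma below_mono: "(x, y) \<in> prec \<Longrightarrow> below x \<subseteq> below y"
  unfolding below_def using prec_trans by blast

lemma closure_below:
  "Y \<subseteq> X \<Longrightarrow> y \<in> phi Y \<Longrightarrow> y \<in> phi (Y \<inter> below y)"
proof (induction y rule: wf_induct_rule[OF wf_prec])
  case (1 y)
  show ?case
  proof (cases "y \<in> Y")
    case True
    then show ?thesis
      using closure_extensive[of "Y \<inter> below y"] \<open>Y \<subseteq> X\<close> unfolding below_def by blast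
  next
    case False
    obtain D where D: "(D, y) \<in> S" "D \<subseteq> phi Y - {y}"
      using base_derives_closure_point[OF base "1.prems" False] by blast
    have "d \<in> phi (Y \<inter> below y)" if "d \<in> D" for d
    proof -
      have "(d, y) \<in> prec"
        using premise_prec D(1) that .
      then have "d \<in> phi (Y \<inter> below d)" and "Y \<inter> below d \<subseteq> Y \<inter> below y"
        using "1.IH" "1.prems"(1) D(2) that below_mono by blast+
      then show ?thesis
        using closure_mono "1.prems"(1) by blast
    qed
    then show ?thesis
      using closure_respects_base[OF base _ D(1)] "1.prems"(1) by blast
  qed
qed

lemma minimal_generator_prec:
  assumes "minimal_generator X phi D y" "y \<notin> D" "d \<in> D"
  shows "(d, y) \<in> prec"
proof (rule ccontr)
  assume "(d, y) \<notin> prec"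
  then have "D \<inter> below y \<subseteq> D - {d}"
    using assms(2,3) unfolding below_def by blast
  moreover have "D \<subseteq> X" "y \<in> phi (D \<inter> below y)"
    using assms(1) closure_below unfolding minimal_generator_def by auto
  ultimately have "y \<in> phi (D - {d})"
    using closure_mono[of "D \<inter> below y" "D - {d}"] by blast
  then show False
    using assms(1,3) unfolding minimal_generator_def by blast
qed

lemma closure_minus_generator_closed:
  assumes mg: "minimal_generator X phi A b" and "a \<in> A"
  shows "phi (phi A - {a}) = phi A - {a}"
proof -
  have AX: "A \<subseteq> X"
    using mg unfolding minimal_generator_def by blast
  have "a \<notin> phi (phi A - {a})"
  proof
    assume "a \<in> phi (phi A - {a})"
    then have a_below: "a \<in> phi ((phi A - {a}) \<inter> below a)"
      using closure_below closure_subset[OF AX] by blast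
    have "g \<in> phi (A - {a})" if g: "g \<in> (phi A - {a}) \<inter> below a" for g
    proof -
      have "a \<notin> below g"
        using g prec_asym unfolding below_def by blast
      then have "A \<inter> below g \<subseteq> A - {a}"
        by blast
      moreover have "g \<in> phi (A \<inter> below g)"
        using closure_below AX g by blast
      ultimately show ?thesis
        using closure_mono[of "A \<inter> below g" "A - {a}"] AX by blast
    qed
    then have "a \<in> phi (A - {a})"
      using a_below closure_subset_closure[of _ "A - {a}"] AX by blast
    then have "A \<subseteq> phi (A - {a})"
      using closure_extensive[of "A - {a}"] AX by blast
    then have "b \<in> phi (A - {a})"
      using mg closure_subset_closure[of A "A - {a}"] AX unfolding minimal_generator_def by blast
    then show False
      using mg \<open>a \<in> A\<close> unfolding minimal_generator_def by blast
  qed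
  moreover have "phi (phi A - {a}) \<subseteq> phi A"
    using closure_subset_closure[of _ A] AX by blast
  ultimately show ?thesis
    using closure_extensive[of "phi A - {a}"] closure_subset[OF AX] by blast
qed

lemma separating_set_contains_closure:
  assumes crit: "critical_base X phi S0" and "(A, b) \<in> S0"
    and T: "T \<in> imp_closed_sets X (S0 - {(A, b)})" "A \<subseteq> T"
  shows "g \<in> phi A \<Longrightarrow> g \<noteq> b \<Longrightarrow> (b, g) \<notin> prec \<Longrightarrow> g \<in> T"
proof (induction g rule: wf_induct_rule[OF wf_prec])
  case (1 g)
  have base0: "implicational_base X phi S0" and irr: "irredundant X S0"
    and mg_all: "\<forall>(D, y)\<in>S0. minimal_generator X phi D y"
    using crit unfolding critical_base_def by auto
  have AX: "A \<subseteq> X"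
    using mg_all \<open>(A, b) \<in> S0\<close> unfolding minimal_generator_def by auto
  show ?case
  proof (cases "g \<in> A")
    case True
    then show ?thesis
      using T(2) by blast
  next
    case False
    obtain D where D: "(D, g) \<in> S0" "D \<subseteq> phi A - {g}"
      using base_derives_closure_point[OF base0 AX "1.prems"(1) False] by blast
    have D_mg: "minimal_generator X phi D g"
      using mg_all D(1) by auto
    have "D \<subseteq> T"
    proof
      fix d assume "d \<in> D"
      then have dg: "(d, g) \<in> prec"
        using minimal_generator_prec[OF D_mg irredundant_conclusion_notin_premise[OF irr D(1)]]
        by blast
      moreover have "d \<in> phi A"
        using D(2) \<open>d \<in> D\<close> by blast
      moreover have "d \<noteq> b" and "(b, d) \<notin> prec"
        using dg "1.prems"(3) prec_trans by auto
      ultimately show "d \<in> T"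
        using "1.IH" by blast
    qed
    moreover have "(D, g) \<in> S0 - {(A, b)}"
      using D(1) "1.prems"(2) by blast
    ultimately show ?thesis
      using imp_closed_sets_respects[OF T(1)] by blast
  qed
qed

lemma closure_minus_generator_and_target_closed:
  assumes crit: "critical_base X phi S0" and Ab: "(A, b) \<in> S0" and "a \<in> A"
  shows "phi (phi A - {a, b}) = phi A - {a, b}"
proof -
  have base0: "implicational_base X phi S0" and irr: "irredundant X S0"
    and mg: "minimal_generator X phi A b"
    using crit Ab unfolding critical_base_def by auto
  have AX: "A \<subseteq> X"
    using mg unfolding minimal_generator_def by blast
  have FaX: "phi A - {a} \<subseteq> X" and FabX: "phi A - {a, b} \<subseteq> X"
    using closure_subset[OF AX] by blast+
  have Fa_closed: "phi (phi A - {a}) = phi A - {a}"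
    using closure_minus_generator_closed[OF mg \<open>a \<in> A\<close>] .
  obtain T where T: "T \<in> imp_closed_sets X (S0 - {(A, b)})" "A \<subseteq> T" "b \<notin> T"
    using irredundant_separating_set[OF irr Ab] by blast
  define M where "M = T \<inter> (phi A - {a})"
  have "M \<subseteq> X"
    using FaX unfolding M_def by blast
  have "y \<in> M" if Dy: "(D, y) \<in> S0" "D \<subseteq> M" for D y
  proof -
    \<comment> \<open>M misses a, so the implication A -> b never fires on M\<close>
    have "(D, y) \<in> S0 - {(A, b)}"
      using Dy \<open>a \<in> A\<close> unfolding M_def by blast
    then have "y \<in> T"
      using imp_closed_sets_respects[OF T(1)] Dy(2) unfolding M_def by blast
    moreover have "y \<in> phi A - {a}"
      using closed_respects_base[OF base0 FaX Fa_closed Dy(1)] Dy(2) unfolding M_def by blast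
    ultimately show ?thesis
      unfolding M_def by blast
  qed
  then have M_closed: "phi M = M"
    unfolding closed_iff_respects_base[OF base0 \<open>M \<subseteq> X\<close>] by auto
  have "(phi A - {a, b}) \<inter> below b \<subseteq> M"
  proof
    fix g assume g: "g \<in> (phi A - {a, b}) \<inter> below b"
    then have "(g, b) \<in> prec"
      unfolding below_def by auto
    then have "g \<in> T"
      using separating_set_contains_closure[OF crit Ab T(1,2)] prec_asym g by blast
    then show "g \<in> M"
      using g unfolding M_def by blast
  qed
  then have "b \<notin> phi (phi A - {a, b})"
    using closure_below[OF FabX] closure_least[OF _ \<open>M \<subseteq> X\<close> M_closed] T(3)
    unfolding M_def by blast
  moreover have "phi (phi A - {a, b}) \<subseteq> phi A - {a}"
    using closure_least[OF _ FaX Fa_closed] by blast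
  ultimately show ?thesis
    using closure_extensive[OF FabX] by blast
qed

end

theorem proposition4:
  fixes X :: "'a set" and phi :: "'a set \<Rightarrow> 'a set"
    and A :: "'a set" and b :: 'a and \<Sigma> :: "('a set \<times> 'a) set"
  assumes "acyclic_convex_geometry X phi"
    and "b \<in> X"
    and "critical_generator X phi A b"
    and "implicational_base X phi \<Sigma>"
  shows "\<exists>C. (C, b) \<in> \<Sigma> \<and> A \<subseteq> C"
proof -
  obtain S where "finite X" "closure_operator X phi" "implicational_base X phi S" "acyclic_base S"
    using assms(1) unfolding acyclic_convex_geometry_def by blast
  then interpret acyclic_closure_space X phi S
    by unfold_locales
  obtain S0 where crit: "critical_base X phi S0" and Ab: "(A, b) \<in> S0"
    and mg: "minimal_generator X phi A b"
    using assms(3) unfolding critical_generator_def by blast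
  define F where "F = phi A"
  have AX: "A \<subseteq> X" and "b \<notin> A"
    using mg irredundant_conclusion_notin_premise[OF _ Ab] crit
    unfolding minimal_generator_def critical_base_def by blast+
  then have FX: "F \<subseteq> X" and "F - {b} \<subseteq> X" and "A \<subseteq> F - {b}"
    using closure_subset closure_extensive unfolding F_def by blast+
  then have "b \<in> phi (F - {b})"
    using mg closure_mono unfolding minimal_generator_def F_def by blast
  then obtain C where C: "(C, b) \<in> \<Sigma>" "C \<subseteq> phi (F - {b}) - {b}"
    using base_derives_closure_point[OF assms(4) \<open>F - {b} \<subseteq> X\<close>] by blast
  have "C \<subseteq> F - {b}"
    using C(2) closure_mono[OF _ FX] closure_idem[OF AX] unfolding F_def by blast
  have "a \<in> C" if "a \<in> A" for a
    using closure_minus_generator_and_target_closed[OF crit Ab that] FX \<open>C \<subseteq> F - {b}\<close>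
      closed_respects_base[OF assms(4) _ _ C(1), of "F - {a, b}"] unfolding F_def by blast
  then show ?thesis
    using C(1) by blast
qed

end
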